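(* Let $G$ be a connected graph with $n$ vertices and $k\ge1$. Let $W_k(G)$ be the sum of the spanning tree weights of all connected $k$-partitions of $G$. Then $$n^{-2(k-1)}\le \frac{W_k(G)}{\tau(G)}\le n^{2(k-1)}.$$
   Context: A connected $k$-partition of $G=(V,E)$ is a partition of $V$ into $k$ nonempty sets (pieces) each inducing a connected subgraph. For a graph $H$, $\tau(H)$ is its number of spanning trees, and the spanning tree weight of a connected partition $P$ is $\prod_{S\in P}\tau(G[S])$. *)

theory Defs
  imports Complex_Main
begin

definition graph :: "'a set \<Rightarrow> 'a set set \<Rightarrow> bool" where
  "graph V E \<longleftrightarrow> finite V \<and> (\<forall>e\<in>E. e \<subseteq> V \<and> card e = 2)"

definition adj :: "'a set set \<Rightarrow> ('a \<times> 'a) set" where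
  "adj E = {(u, v). {u, v} \<in> E}"

definition connected_graph :: "'a set \<Rightarrow> 'a set set \<Rightarrow> bool" where
  "connected_graph V E \<longleftrightarrow> V \<noteq> {} \<and> (\<forall>u\<in>V. \<forall>v\<in>V. (u, v) \<in> (adj {e\<in>E. e \<subseteq> V})\<^sup>*)"

definition induced_edges :: "'a set set \<Rightarrow> 'a set \<Rightarrow> 'a set set" where
  "induced_edges E S = {e\<in>E. e \<subseteq> S}"

definition spanning_tree :: "'a set \<Rightarrow> 'a set set \<Rightarrow> 'a set set \<Rightarrow> bool" where
  "spanning_tree V E T \<longleftrightarrow> T \<subseteq> E \<and> connected_graph V T \<and> card T = card V - 1"

definition num_spanning_trees :: "'a set \<Rightarrow> 'a set set \<Rightarrow> nat" ("\<tau>") where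
  "\<tau> V E = card {T. spanning_tree V E T}"

definition connected_partition :: "'a set \<Rightarrow> 'a set set \<Rightarrow> nat \<Rightarrow> 'a set set \<Rightarrow> bool" where
  "connected_partition V E k P \<longleftrightarrow>
     \<Union>P = V \<and> (\<forall>S\<in>P. S \<noteq> {}) \<and> (\<forall>S\<in>P. \<forall>S'\<in>P. S \<noteq> S' \<longrightarrow> S \<inter> S' = {})
     \<and> finite P \<and> card P = k \<and> (\<forall>S\<in>P. connected_graph S (induced_edges E S))"

definition spanning_tree_weight :: "'a set set \<Rightarrow> 'a set set \<Rightarrow> nat" where
  "spanning_tree_weight E P = (\<Prod>S\<in>P. \<tau> S (induced_edges E S))"

definition W :: "nat \<Rightarrow> 'a set \<Rightarrow> 'a set set \<Rightarrow> nat" where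
  "W k V E = (\<Sum>P\<in>{P. connected_partition V E k P}. spanning_tree_weight E P)"

end

theory Submission
  imports Defs "HOL-Library.FuncSet"
begin

text \<open>
  A pair (P, f) of a connected k-partition P and a spanning tree f S of G[S] for every piece S
  amounts to a spanning forest of G with k components, and W k V E counts these pairs; in
  particular W 1 V E = \<tau> V E. Deleting an edge {x, y} of one of the trees splits its piece and
  gives a pair for k + 1, from which adding {x, y} back recovers the original. Conversely, if G
  is connected and k \<ge> 1, some edge {x, y} of G joins two pieces of a (k + 1)-partition, and
  adding it to the union of their trees gives a pair for k, from which deleting {x, y} recovers
  the original. Each operation is therefore injective once the endpoints x, y \<in> V are
  recorded, so consecutive values of W differ by a factor of at most n^2, and k - 1 steps from
  W 1 = \<tau> give both bounds. That \<tau> > 0 follows in the same way from W n \<ge> 1, witnessed by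
  the partition into singletons.
\<close>

section \<open>Graphs and reachability\<close>

lemma graph_finite_edges: "graph V E \<Longrightarrow> finite E"
  unfolding graph_def by (meson Pow_iff finite_Pow_iff rev_finite_subset subsetI)

lemma graph_edgeE:
  assumes "graph V E" "e \<in> E"
  obtains a b where "a \<noteq> b" "e = {a, b}" "a \<in> V" "b \<in> V"
  using assms unfolding graph_def by (metis card_2_iff insert_subset)

lemma graph_doubleton_edge:
  assumes "graph V E" "{x, y} \<in> E"
  shows "x \<noteq> y \<and> x \<in> V \<and> y \<in> V"
proof -
  have "{x, y} \<subseteq> V" "card {x, y} = 2" using assms unfolding graph_def by auto
  then show ?thesis by (cases "x = y") auto
qed

lemma graph_empty_notin: "graph V E \<Longrightarrow> {} \<notin> E"
  unfolding graph_def by fastforce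

lemma graph_induced_edges:
  assumes "graph S F" "A \<subseteq> S"
  shows "graph A (induced_edges F A)"
proof -
  have "finite A" using assms graph_def rev_finite_subset by metis
  then show ?thesis using assms(1) unfolding graph_def induced_edges_def by simp
qed

lemma graph_edges_disjoint:
  assumes "graph A TA" "graph B TB" "A \<inter> B = {}"
  shows "TA \<inter> TB = {}"
proof -
  have "TA \<subseteq> Pow A" "TB \<subseteq> Pow B" using assms(1,2) unfolding graph_def by auto
  then have "TA \<inter> TB \<subseteq> {{}}" using assms(3) by blast
  then show ?thesis using graph_empty_notin[OF assms(1)] by blast
qed

lemma graph_Un_edge:
  assumes "graph A TA" "graph B TB" "x \<in> A" "y \<in> B" "x \<noteq> y"
  shows "graph (A \<union> B) (TA \<union> TB \<union> {{x, y}})"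
proof -
  have "e \<subseteq> A \<union> B \<and> card e = 2" if e: "e \<in> TA \<union> TB \<union> {{x, y}}" for e
  proof -
    consider "e \<in> TA" | "e \<in> TB" | "e = {x, y}" using e by blast
    then show ?thesis
    proof cases
      case 1 then show ?thesis using assms(1) unfolding graph_def by blast
    next
      case 2 then show ?thesis using assms(2) unfolding graph_def by blast
    next
      case 3 then show ?thesis using assms(3-5) by simp
    qed
  qed
  moreover have "finite (A \<union> B)" using assms(1,2) unfolding graph_def by simp
  ultimately show ?thesis unfolding graph_def by simp
qed

lemma adj_converse [simp]: "(adj F)\<inverse> = adj F"
  by (auto simp: adj_def insert_commute)

lemma rtrancl_adj_sym: "(u, v) \<in> (adj F)\<^sup>* \<Longrightarrow> (v, u) \<in> (adj F)\<^sup>*"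
  by (metis adj_converse rtrancl_converseI)

lemma adj_mono: "F \<subseteq> F' \<Longrightarrow> adj F \<subseteq> adj F'"
  by (auto simp: adj_def)

lemma rtrancl_adj_mono: "(u, v) \<in> (adj F)\<^sup>* \<Longrightarrow> F \<subseteq> F' \<Longrightarrow> (u, v) \<in> (adj F')\<^sup>*"
  by (meson adj_mono rtrancl_mono subsetD)

lemma rtrancl_exits_set:
  assumes "(u, v) \<in> R\<^sup>*" "u \<in> A" "v \<notin> A"
  shows "\<exists>a b. (a, b) \<in> R \<and> a \<in> A \<and> b \<notin> A"
  using assms by (induction rule: rtrancl_induct) auto

lemma rtrancl_adj_induced_edges:
  assumes "(u, w) \<in> (adj F)\<^sup>*" "u \<in> A" "\<And>a b. {a, b} \<in> F \<Longrightarrow> a \<in> A \<Longrightarrow> b \<in> A"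
  shows "w \<in> A \<and> (u, w) \<in> (adj (induced_edges F A))\<^sup>*"
  using assms(1)
proof (induction rule: rtrancl_induct)
  case base
  then show ?case using assms(2) by simp
next
  case (step y z)
  then have "{y, z} \<in> F" by (simp add: adj_def)
  with step assms(3) have "z \<in> A" "(y, z) \<in> adj (induced_edges F A)"
    by (auto simp: adj_def induced_edges_def)
  with step show ?case by (meson rtrancl.rtrancl_into_rtrancl)
qed

lemma rtrancl_adj_Diff_edge:
  assumes "(x, w) \<in> (adj T)\<^sup>*"
  shows "(x, w) \<in> (adj (T - {{x, y}}))\<^sup>* \<or> (y, w) \<in> (adj (T - {{x, y}}))\<^sup>*"
  using assms
proof (induction rule: rtrancl_induct)
  case base
  then show ?case by simp
next
  case (step a b)
  show ?case
  proof (cases "{a, b} = {x, y}")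
    case True
    then have "b = x \<or> b = y" by (metis doubleton_eq_iff)
    then show ?thesis by auto
  next
    case False
    with step have "(a, b) \<in> adj (T - {{x, y}})" by (simp add: adj_def)
    with step.IH show ?thesis by (meson rtrancl.rtrancl_into_rtrancl)
  qed
qed

definition reachable_within :: "'a set \<Rightarrow> 'a set set \<Rightarrow> 'a \<Rightarrow> 'a set" where
  "reachable_within S F x = {w \<in> S. (x, w) \<in> (adj F)\<^sup>*}"

lemma reachable_within_closed:
  assumes "F \<subseteq> Pow S" "{a, b} \<in> F" "a \<in> reachable_within S F x"
  shows "b \<in> reachable_within S F x"
proof -
  have "(x, a) \<in> (adj F)\<^sup>*" using assms(3) by (simp add: reachable_within_def)
  moreover have "(a, b) \<in> adj F" using assms(2) by (simp add: adj_def)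
  ultimately have "(x, b) \<in> (adj F)\<^sup>*" by (rule rtrancl_into_rtrancl)
  moreover have "b \<in> S" using assms(1,2) by auto
  ultimately show ?thesis by (simp add: reachable_within_def)
qed

lemma induced_edges_reachable_within_Un:
  assumes "graph S F"
  shows "induced_edges F (reachable_within S F x) \<union> induced_edges F (S - reachable_within S F x) = F"
proof -
  let ?R = "reachable_within S F x"
  have FS: "F \<subseteq> Pow S" using assms unfolding graph_def by auto
  have "e \<subseteq> ?R \<or> e \<subseteq> S - ?R" if "e \<in> F" for e
  proof -
    obtain a b where ab: "e = {a, b}" "a \<in> S" "b \<in> S" using graph_edgeE[OF assms \<open>e \<in> F\<close>] by metis
    have "a \<in> ?R \<longleftrightarrow> b \<in> ?R"
      using reachable_within_closed[OF FS, of a b] reachable_within_closed[OF FS, of b a] ab that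
      by (auto simp: insert_commute)
    then show ?thesis using ab by auto
  qed
  then show ?thesis unfolding induced_edges_def by auto
qed

lemma connected_graph_iff:
  "T \<subseteq> Pow S \<Longrightarrow> connected_graph S T \<longleftrightarrow> S \<noteq> {} \<and> (\<forall>u\<in>S. \<forall>v\<in>S. (u, v) \<in> (adj T)\<^sup>*)"
proof -
  assume "T \<subseteq> Pow S"
  then have "{e \<in> T. e \<subseteq> S} = T" by auto
  then show ?thesis by (simp add: connected_graph_def)
qed

lemma connected_graphI_root:
  assumes "T \<subseteq> Pow S" "x \<in> S" "\<And>w. w \<in> S \<Longrightarrow> (x, w) \<in> (adj T)\<^sup>*"
  shows "connected_graph S T"
proof -
  have "(u, v) \<in> (adj T)\<^sup>*" if "u \<in> S" "v \<in> S" for u v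
    using assms(3)[OF that(1)] assms(3)[OF that(2)] by (meson rtrancl_adj_sym rtrancl_trans)
  then show ?thesis using assms(1,2) by (auto simp: connected_graph_iff)
qed

lemma connected_graph_mono:
  assumes "connected_graph S T" "T \<subseteq> T'"
  shows "connected_graph S T'"
proof -
  have "{e \<in> T. e \<subseteq> S} \<subseteq> {e \<in> T'. e \<subseteq> S}" using assms(2) by auto
  then show ?thesis
    using assms(1) unfolding connected_graph_def by (meson rtrancl_adj_mono)
qed

lemma connected_reachable_within:
  assumes "F \<subseteq> Pow S" "x \<in> S"
  shows "connected_graph (reachable_within S F x) (induced_edges F (reachable_within S F x))"
    (is "connected_graph ?A _")
proof (rule connected_graphI_root)
  show "x \<in> ?A" using assms(2) by (simp add: reachable_within_def)
  fix w assume "w \<in> ?A"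
  then have "(x, w) \<in> (adj F)\<^sup>*" by (simp add: reachable_within_def)
  then show "(x, w) \<in> (adj (induced_edges F ?A))\<^sup>*"
    using rtrancl_adj_induced_edges \<open>x \<in> ?A\<close> reachable_within_closed[OF assms(1)] by metis
qed (auto simp: induced_edges_def)

text \<open>Each vertex other than a root u has a parent one step closer to u, and distinct vertices
  have distinct parent edges.\<close>
lemma connected_graph_card_le:
  assumes "finite T" "connected_graph S T"
  shows "card S - 1 \<le> card T"
proof -
  obtain u where u: "u \<in> S" using assms(2) unfolding connected_graph_def by blast
  have reach: "(u, w) \<in> (adj T)\<^sup>*" if "w \<in> S" for w
  proof -
    have "(u, w) \<in> (adj {e \<in> T. e \<subseteq> S})\<^sup>*"
      using assms(2) u that unfolding connected_graph_def by blast
    then show ?thesis by (rule rtrancl_adj_mono) auto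
  qed
  define d where "d w = (LEAST m. (u, w) \<in> adj T ^^ m)" for w
  have "\<exists>p. (p, w) \<in> adj T \<and> d p < d w" if "w \<in> S - {u}" for w
  proof -
    have dw: "(u, w) \<in> adj T ^^ d w"
      using reach that unfolding d_def rtrancl_power by (meson DiffD1 LeastI)
    moreover have "d w \<noteq> 0" using dw that by (cases "d w") auto
    ultimately obtain m p where "d w = Suc m" "(u, p) \<in> adj T ^^ m" "(p, w) \<in> adj T"
      by (metis not0_implies_Suc relpow_Suc_E)
    moreover have "d p \<le> m" using calculation unfolding d_def by (meson Least_le)
    ultimately show ?thesis by auto
  qed
  then obtain p where p: "\<And>w. w \<in> S - {u} \<Longrightarrow> (p w, w) \<in> adj T \<and> d (p w) < d w"
    by metis
  have "inj_on (\<lambda>w. {p w, w}) (S - {u})"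
  proof (rule inj_onI)
    fix w1 w2 assume w: "w1 \<in> S - {u}" "w2 \<in> S - {u}" "{p w1, w1} = {p w2, w2}"
    show "w1 = w2"
    proof (rule ccontr)
      assume "w1 \<noteq> w2"
      then have "p w1 = w2" "p w2 = w1" using w(3) by (metis doubleton_eq_iff)+
      then show False using p[OF w(1)] p[OF w(2)] by simp
    qed
  qed
  moreover have "(\<lambda>w. {p w, w}) ` (S - {u}) \<subseteq> T" using p by (auto simp: adj_def)
  ultimately have "card (S - {u}) \<le> card T" using assms(1) by (meson card_inj_on_le)
  then show ?thesis using u by (simp add: card_Diff_singleton)
qed

section \<open>Trees\<close>

definition tree :: "'a set \<Rightarrow> 'a set set \<Rightarrow> bool" where
  "tree S T \<longleftrightarrow> graph S T \<and> connected_graph S T \<and> card T = card S - 1"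

lemma tree_graph: "tree S T \<Longrightarrow> graph S T"
  unfolding tree_def by simp

lemma tree_edges_subset: "tree S T \<Longrightarrow> T \<subseteq> Pow S"
  unfolding tree_def graph_def by auto

lemma tree_finite: "tree S T \<Longrightarrow> finite S \<and> finite T"
  unfolding tree_def using graph_finite_edges graph_def by blast

lemma tree_reachable: "tree S T \<Longrightarrow> u \<in> S \<Longrightarrow> v \<in> S \<Longrightarrow> (u, v) \<in> (adj T)\<^sup>*"
  using connected_graph_iff[OF tree_edges_subset] unfolding tree_def by blast

lemma tree_card_ge_1: "tree S T \<Longrightarrow> 1 \<le> card S"
  unfolding tree_def connected_graph_def graph_def by (simp add: Suc_le_eq card_gt_0_iff)

lemma tree_Diff_edge_not_reachable:
  assumes "tree S T" "{x, y} \<in> T"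
  shows "(x, y) \<notin> (adj (T - {{x, y}}))\<^sup>*"
proof
  let ?F = "T - {{x, y}}"
  assume xy: "(x, y) \<in> (adj ?F)\<^sup>*"
  have xyS: "x \<noteq> y" "x \<in> S" "y \<in> S"
    using assms graph_doubleton_edge tree_graph by metis+
  have "(x, w) \<in> (adj ?F)\<^sup>*" if "w \<in> S" for w
    using rtrancl_adj_Diff_edge[OF tree_reachable[OF assms(1) xyS(2) that]] xy
    by (meson rtrancl_trans)
  then have "connected_graph S ?F"
    using connected_graphI_root tree_edges_subset[OF assms(1)] xyS(2) by (metis Diff_subset order_trans)
  then have "card S - 1 \<le> card ?F"
    using connected_graph_card_le tree_finite[OF assms(1)] by blast
  moreover have "card ?F = card S - 2"
    using assms tree_finite[OF assms(1)] unfolding tree_def by simp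
  moreover have "2 \<le> card S"
    using xyS tree_finite[OF assms(1)] card_mono[of S "{x, y}"] by simp
  ultimately show False by linarith
qed

lemma tree_Diff_edge_reachable_within_complement:
  assumes "tree S T" "{x, y} \<in> T"
  shows "S - reachable_within S (T - {{x, y}}) x = reachable_within S (T - {{x, y}}) y"
proof (intro equalityI subsetI)
  let ?F = "T - {{x, y}}"
  have x: "x \<in> S" using assms graph_doubleton_edge tree_graph by metis
  fix w
  assume "w \<in> S - reachable_within S ?F x"
  then show "w \<in> reachable_within S ?F y"
    using rtrancl_adj_Diff_edge[OF tree_reachable[OF assms(1) x]] by (auto simp: reachable_within_def)
next
  let ?F = "T - {{x, y}}"
  fix w
  assume w: "w \<in> reachable_within S ?F y"
  have "(x, w) \<notin> (adj ?F)\<^sup>*"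
  proof
    assume "(x, w) \<in> (adj ?F)\<^sup>*"
    moreover have "(w, y) \<in> (adj ?F)\<^sup>*"
      using w by (simp add: reachable_within_def rtrancl_adj_sym)
    ultimately show False using tree_Diff_edge_not_reachable[OF assms] by (meson rtrancl_trans)
  qed
  then show "w \<in> S - reachable_within S ?F x" using w by (simp add: reachable_within_def)
qed

lemma tree_Diff_edge:
  assumes "tree S T" "{x, y} \<in> T"
  defines "F \<equiv> T - {{x, y}}"
  defines "A \<equiv> reachable_within S F x"
  shows "x \<in> A" "y \<in> S - A" "tree A (induced_edges F A)" "tree (S - A) (induced_edges F (S - A))"
    and "induced_edges F A \<union> induced_edges F (S - A) = F"
proof -
  let ?B = "S - A"
  have gF: "graph S F" using assms(1) unfolding tree_def graph_def F_def by auto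
  then have FS: "F \<subseteq> Pow S" unfolding graph_def by auto
  have xyS: "x \<in> S" "y \<in> S" using assms(1,2) graph_doubleton_edge tree_graph by metis+
  show x: "x \<in> A" using xyS unfolding A_def reachable_within_def by simp
  show y: "y \<in> ?B" using xyS tree_Diff_edge_not_reachable[OF assms(1,2)]
    unfolding A_def F_def reachable_within_def by simp
  show Un: "induced_edges F A \<union> induced_edges F ?B = F"
    unfolding A_def by (rule induced_edges_reachable_within_Un[OF gF])
  have cA: "connected_graph A (induced_edges F A)"
    unfolding A_def by (rule connected_reachable_within[OF FS xyS(1)])
  have "?B = reachable_within S F y"
    using tree_Diff_edge_reachable_within_complement[OF assms(1,2)] unfolding A_def F_def .
  then have cB: "connected_graph ?B (induced_edges F ?B)"
    using connected_reachable_within[OF FS xyS(2)] by simp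
  have AS: "A \<subseteq> S" unfolding A_def reachable_within_def by auto
  have gA: "graph A (induced_edges F A)" and gB: "graph ?B (induced_edges F ?B)"
    using graph_induced_edges[OF gF] AS by auto
  have fin: "finite S" "finite F" "finite A" "finite (induced_edges F A)" "finite (induced_edges F ?B)"
    using gF gA gB graph_finite_edges unfolding graph_def by blast+
  have "card (induced_edges F A) + card (induced_edges F ?B) = card F"
    using Un graph_edges_disjoint[OF gA gB] fin by (metis Diff_disjoint card_Un_disjoint)
  also have "card F = card S - 2"
    using assms(1,2) fin(1) unfolding tree_def F_def by (simp add: tree_finite)
  finally have "card (induced_edges F A) + card (induced_edges F ?B) = card S - 2" .
  moreover have "card A + card ?B = card S" using AS fin by (metis card_Diff_subset card_mono le_add_diff_inverse)
  moreover have "1 \<le> card A" "1 \<le> card ?B" using x y fin by (auto simp: Suc_le_eq card_gt_0_iff)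
  moreover have "card A - 1 \<le> card (induced_edges F A)" "card ?B - 1 \<le> card (induced_edges F ?B)"
    using connected_graph_card_le cA cB fin by blast+
  ultimately have "card (induced_edges F A) = card A - 1" "card (induced_edges F ?B) = card ?B - 1"
    by linarith+
  then show "tree A (induced_edges F A)" "tree ?B (induced_edges F ?B)"
    using gA gB cA cB unfolding tree_def by blast+
qed

lemma tree_join:
  assumes "tree A TA" "tree B TB" "A \<inter> B = {}" "x \<in> A" "y \<in> B"
  shows "tree (A \<union> B) (TA \<union> TB \<union> {{x, y}})"
proof -
  let ?T = "TA \<union> TB \<union> {{x, y}}"
  have sub: "TA \<subseteq> Pow A" "TB \<subseteq> Pow B" using assms(1,2) tree_edges_subset by auto
  have fin: "finite A" "finite B" "finite TA" "finite TB" using assms(1,2) tree_finite by auto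
  have "x \<noteq> y" using assms(3-5) by blast
  then have "graph (A \<union> B) ?T" using graph_Un_edge assms tree_graph by metis
  moreover have "connected_graph (A \<union> B) ?T"
  proof (rule connected_graphI_root)
    show "?T \<subseteq> Pow (A \<union> B)" using sub assms(4,5) by auto
    show "x \<in> A \<union> B" using assms(4) by simp
    fix w assume w: "w \<in> A \<union> B"
    show "(x, w) \<in> (adj ?T)\<^sup>*"
    proof (cases "w \<in> A")
      case True
      have "(x, w) \<in> (adj TA)\<^sup>*" using tree_reachable[OF assms(1,4) True] .
      then show ?thesis by (rule rtrancl_adj_mono) auto
    next
      case False
      then have "(y, w) \<in> (adj TB)\<^sup>*" using w tree_reachable[OF assms(2,5)] by blast
      then have "(y, w) \<in> (adj ?T)\<^sup>*" by (rule rtrancl_adj_mono) auto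
      moreover have "(x, y) \<in> adj ?T" by (simp add: adj_def)
      ultimately show ?thesis by (meson converse_rtrancl_into_rtrancl)
    qed
  qed
  moreover have "card ?T = card (A \<union> B) - 1"
  proof -
    have "TA \<inter> TB = {}" using graph_edges_disjoint[OF _ _ assms(3)] assms(1,2) tree_graph by blast
    moreover have "{x, y} \<notin> TA \<union> TB" using sub assms(3-5) by blast
    ultimately have "card ?T = card TA + card TB + 1" using fin by (simp add: card_Un_disjoint)
    moreover have "1 \<le> card A" "1 \<le> card B" using assms(1,2) tree_card_ge_1 by auto
    ultimately show ?thesis
      using assms(1-3) fin unfolding tree_def by (simp add: card_Un_disjoint)
  qed
  ultimately show ?thesis unfolding tree_def by blast
qed

lemma reachable_within_Un_tree:
  assumes "tree A TA" "graph B TB" "A \<inter> B = {}" "x \<in> A"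
  shows "reachable_within (A \<union> B) (TA \<union> TB) x = A"
proof (intro equalityI subsetI)
  fix w assume "w \<in> reachable_within (A \<union> B) (TA \<union> TB) x"
  then have "(x, w) \<in> (adj (TA \<union> TB))\<^sup>*" by (simp add: reachable_within_def)
  moreover have "TA \<subseteq> Pow A" "TB \<subseteq> Pow B"
    using tree_edges_subset[OF assms(1)] assms(2) unfolding graph_def by auto
  then have "b \<in> A" if "{a, b} \<in> TA \<union> TB" "a \<in> A" for a b
    using that assms(3) by blast
  ultimately show "w \<in> A" using rtrancl_adj_induced_edges[OF _ assms(4)] by blast
next
  fix w assume w: "w \<in> A"
  have "(x, w) \<in> (adj TA)\<^sup>*" using tree_reachable[OF assms(1,4) w] .
  then have "(x, w) \<in> (adj (TA \<union> TB))\<^sup>*" by (rule rtrancl_adj_mono) auto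
  then show "w \<in> reachable_within (A \<union> B) (TA \<union> TB) x" using w by (simp add: reachable_within_def)
qed

lemma induced_edges_Un_disjoint:
  assumes "graph A TA" "graph B TB" "A \<inter> B = {}"
  shows "induced_edges (TA \<union> TB) A = TA"
proof -
  have TA: "TA \<subseteq> Pow A" and TB: "TB \<subseteq> Pow B" using assms(1,2) unfolding graph_def by auto
  have "e \<notin> TB" if "e \<subseteq> A" for e
  proof
    assume "e \<in> TB"
    then have "e = {}" using TB that assms(3) by blast
    with \<open>e \<in> TB\<close> show False using graph_empty_notin[OF assms(2)] by simp
  qed
  then show ?thesis using TA unfolding induced_edges_def by blast
qed

section \<open>Connected partitions\<close>

lemma connected_partition_piece_subset: "connected_partition V E k P \<Longrightarrow> S \<in> P \<Longrightarrow> S \<subseteq> V"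
  unfolding connected_partition_def by blast

lemma connected_partition_disjoint:
  "connected_partition V E k P \<Longrightarrow> S \<in> P \<Longrightarrow> S' \<in> P \<Longrightarrow> x \<in> S \<Longrightarrow> x \<in> S' \<Longrightarrow> S = S'"
  unfolding connected_partition_def by blast

lemma finite_connected_partitions: "finite V \<Longrightarrow> finite {P. connected_partition V E k P}"
  by (rule finite_subset[of _ "Pow (Pow V)"]) (auto simp: connected_partition_def)

lemma connected_partition_replace:
  assumes P: "connected_partition V E k P" and "Q \<subseteq> P" "finite Q'" "\<Union>Q' = \<Union>Q"
    and "\<forall>S\<in>Q'. S \<noteq> {} \<and> connected_graph S (induced_edges E S)"
    and "\<forall>S\<in>Q'. \<forall>S'\<in>Q'. S \<noteq> S' \<longrightarrow> S \<inter> S' = {}"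
  shows "connected_partition V E (k - card Q + card Q') (P - Q \<union> Q')"
proof -
  have disjP: "S \<inter> S' = {}" if "S \<in> P" "S' \<in> P" "S \<noteq> S'" for S S'
    using P that unfolding connected_partition_def by blast
  have outside: "S \<inter> S' = {}" if "S \<in> P - Q" "S' \<in> Q'" for S S'
  proof -
    have "S' \<subseteq> \<Union>Q" using assms(4) that(2) by blast
    moreover have "S \<inter> \<Union>Q = {}" using disjP that(1) assms(2) by blast
    ultimately show ?thesis by blast
  qed
  have "\<Union>(P - Q \<union> Q') = \<Union>(P - Q) \<union> \<Union>Q" using assms(4) by auto
  also have "\<dots> = V" using assms(2) P unfolding connected_partition_def by auto
  finally have "\<Union>(P - Q \<union> Q') = V" .
  moreover have "card (P - Q \<union> Q') = k - card Q + card Q'"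
  proof -
    have "S \<notin> Q'" if "S \<in> P - Q" for S
      using outside[OF that] assms(5) by (metis Int_absorb)
    then have "(P - Q) \<inter> Q' = {}" by blast
    moreover have "finite P" "card P = k" using P unfolding connected_partition_def by auto
    ultimately show ?thesis
      using assms(2,3) by (simp add: card_Un_disjoint card_Diff_subset finite_subset)
  qed
  moreover have "S \<inter> S' = {}" if "S \<in> P - Q \<union> Q'" "S' \<in> P - Q \<union> Q'" "S \<noteq> S'" for S S'
    using that disjP outside assms(6) by (metis DiffD1 Int_commute Un_iff)
  ultimately show ?thesis
    using P assms(3,5) unfolding connected_partition_def by auto
qed

lemma connected_partition_split:
  assumes P: "connected_partition V E k P" and "S \<in> P" "A \<subseteq> S" "A \<noteq> {}" "S - A \<noteq> {}"
    and "connected_graph A (induced_edges E A)" "connected_graph (S - A) (induced_edges E (S - A))"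
  shows "connected_partition V E (Suc k) (P - {S} \<union> {A, S - A})"
proof -
  have "A \<noteq> S - A" using assms(4) by blast
  then have "card {A, S - A} = 2" by simp
  moreover have "1 \<le> k" using P assms(2) unfolding connected_partition_def by (auto simp: Suc_le_eq card_gt_0_iff)
  moreover have "connected_partition V E (k - card {S} + card {A, S - A}) (P - {S} \<union> {A, S - A})"
    by (rule connected_partition_replace[OF P]) (use assms in auto)
  ultimately show ?thesis by (simp add: Suc_diff_le)
qed

lemma connected_partition_merge:
  assumes P: "connected_partition V E (Suc k) P" and "A \<in> P" "B \<in> P" "A \<noteq> B"
    and "connected_graph (A \<union> B) (induced_edges E (A \<union> B))"
  shows "connected_partition V E k (P - {A, B} \<union> {A \<union> B})"
proof -
  have "card {A, B} \<le> Suc k"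
    using P assms(2,3) unfolding connected_partition_def by (metis card_mono empty_subsetI insert_subset)
  then have k: "1 \<le> k" using assms(4) by simp
  have "A \<noteq> {}" using P assms(2) unfolding connected_partition_def by blast
  then have "connected_partition V E (Suc k - card {A, B} + card {A \<union> B}) (P - {A, B} \<union> {A \<union> B})"
    by (intro connected_partition_replace[OF P]) (use assms in auto)
  then show ?thesis using k assms(4) by simp
qed

lemma connected_partition_crossing_edge:
  assumes "connected_graph V E" "connected_partition V E k P" "2 \<le> k"
  obtains A B x y where "A \<in> P" "B \<in> P" "A \<noteq> B" "x \<in> A" "y \<in> B" "{x, y} \<in> E"
proof -
  have P: "\<Union>P = V" "finite P" "card P = k" "\<And>S. S \<in> P \<Longrightarrow> S \<noteq> {}"
    using assms(2) unfolding connected_partition_def by auto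
  obtain A A' where A: "A \<in> P" "A' \<in> P" "A \<noteq> A'"
    using P(2,3) assms(3) by (metis One_nat_def card_le_Suc0_iff_eq not_less_eq_eq numeral_2_eq_2)
  obtain u v where uv: "u \<in> A" "v \<in> A'" using P(4) A by blast
  have "v \<notin> A" using connected_partition_disjoint[OF assms(2) A(1,2)] A(3) uv(2) by blast
  moreover have "u \<in> V" "v \<in> V" using uv A P(1) by auto
  then have "(u, v) \<in> (adj {e \<in> E. e \<subseteq> V})\<^sup>*" using assms(1) unfolding connected_graph_def by blast
  ultimately obtain x y where xy: "(x, y) \<in> adj {e \<in> E. e \<subseteq> V}" "x \<in> A" "y \<notin> A"
    using rtrancl_exits_set[of u v _ A] uv(1) by blast
  then have "{x, y} \<in> E" "y \<in> V" by (auto simp: adj_def)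
  then obtain B where "B \<in> P" "y \<in> B" using P(1) by blast
  then show ?thesis using that A(1) xy(2,3) \<open>{x, y} \<in> E\<close> by blast
qed

lemma connected_partition_large_piece:
  assumes "connected_partition V E k P" "finite V" "k < card V"
  shows "\<exists>S\<in>P. 2 \<le> card S"
proof (rule ccontr)
  assume "\<not> (\<exists>S\<in>P. 2 \<le> card S)"
  then have small: "card S \<le> 1" if "S \<in> P" for S using that by force
  have P: "\<Union>P = V" "finite P" "card P = k" "\<And>S. S \<in> P \<Longrightarrow> S \<noteq> {}"
    "\<And>S S'. S \<in> P \<Longrightarrow> S' \<in> P \<Longrightarrow> S \<noteq> S' \<Longrightarrow> S \<inter> S' = {}"
    using assms(1) unfolding connected_partition_def by auto
  have fin: "finite S" if "S \<in> P" for S using that P(1) assms(2) by (meson Union_upper finite_subset)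
  have one: "card S = 1" if "S \<in> P" for S
    using small[OF that] fin[OF that] P(4)[OF that] by (cases "card S") auto
  have "card V = (\<Sum>S\<in>P. card S)"
    unfolding P(1)[symmetric] by (rule card_Union_disjoint) (auto simp: pairwise_def disjnt_def P(5) fin)
  also have "\<dots> = card P" using one by simp
  finally show False using P(3) assms(3) by simp
qed

definition piece_of :: "'a set set \<Rightarrow> 'a \<Rightarrow> 'a set" where
  "piece_of P x = (THE S. S \<in> P \<and> x \<in> S)"

lemma piece_of_eq: "connected_partition V E k P \<Longrightarrow> S \<in> P \<Longrightarrow> x \<in> S \<Longrightarrow> piece_of P x = S"
  unfolding piece_of_def by (rule the_equality) (auto dest: connected_partition_disjoint)

section \<open>Connected partitions with a spanning tree on every piece\<close>

definition spanning_trees :: "'a set set \<Rightarrow> 'a set \<Rightarrow> 'a set set set" where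
  "spanning_trees E S = {T. spanning_tree S (induced_edges E S) T}"

lemma spanning_trees_iff:
  assumes "graph V E" "S \<subseteq> V"
  shows "T \<in> spanning_trees E S \<longleftrightarrow> T \<subseteq> E \<and> tree S T"
proof -
  have "finite S" using assms finite_subset unfolding graph_def by blast
  then have "graph S T \<longleftrightarrow> T \<subseteq> Pow S" if "T \<subseteq> E"
    using that assms(1) unfolding graph_def by auto
  then show ?thesis
    unfolding spanning_trees_def spanning_tree_def tree_def induced_edges_def by auto
qed

lemma finite_spanning_trees: "finite E \<Longrightarrow> finite (spanning_trees E S)"
  by (rule finite_subset[of _ "Pow E"])
    (auto simp: spanning_trees_def spanning_tree_def induced_edges_def)

lemma tree_connected_induced_edges:
  assumes "T \<subseteq> E" "tree S T"
  shows "connected_graph S (induced_edges E S)"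
proof (rule connected_graph_mono)
  show "connected_graph S T" using assms(2) unfolding tree_def by simp
  show "T \<subseteq> induced_edges E S" using assms tree_edges_subset unfolding induced_edges_def by blast
qed

type_synonym 'a tree_partition = "'a set set \<times> ('a set \<Rightarrow> 'a set set)"

definition tree_partitions :: "nat \<Rightarrow> 'a set \<Rightarrow> 'a set set \<Rightarrow> 'a tree_partition set" where
  "tree_partitions k V E = (SIGMA P:{P. connected_partition V E k P}. Pi\<^sub>E P (spanning_trees E))"

lemma
  assumes "graph V E"
  shows finite_tree_partitions: "finite (tree_partitions k V E)"
    and card_tree_partitions: "card (tree_partitions k V E) = W k V E"
proof -
  have fin: "finite {P. connected_partition V E k P}"
    using assms finite_connected_partitions unfolding graph_def by blast
  have finP: "finite P" if "connected_partition V E k P" for P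
    using that unfolding connected_partition_def by simp
  have finST: "finite (spanning_trees E S)" for S
    using finite_spanning_trees graph_finite_edges[OF assms] .
  show "finite (tree_partitions k V E)"
    unfolding tree_partitions_def using fin finP finST by (intro finite_SigmaI finite_PiE) auto
  have "card (tree_partitions k V E) = (\<Sum>P | connected_partition V E k P. card (Pi\<^sub>E P (spanning_trees E)))"
    unfolding tree_partitions_def using fin finP finST by (subst card_SigmaI) (auto intro!: finite_PiE)
  also have "\<dots> = W k V E"
    unfolding W_def spanning_tree_weight_def
    by (rule sum.cong) (auto simp: card_PiE finP spanning_trees_def num_spanning_trees_def)
  finally show "card (tree_partitions k V E) = W k V E" .
qed

(* Pieces that disappear are mapped to undefined, since members of Pi\<^sub>E P are extensional. *)
fun remove_tree_edge :: "'a tree_partition \<Rightarrow> 'a \<Rightarrow> 'a \<Rightarrow> 'a tree_partition" where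
  "remove_tree_edge (P, f) x y =
     (let S = piece_of P x; F = f S - {{x, y}}; A = reachable_within S F x
      in (P - {S} \<union> {A, S - A},
          (f(S := undefined))(A := induced_edges F A, S - A := induced_edges F (S - A))))"

fun add_tree_edge :: "'a tree_partition \<Rightarrow> 'a \<Rightarrow> 'a \<Rightarrow> 'a tree_partition" where
  "add_tree_edge (P, f) x y =
     (let A = piece_of P x; B = piece_of P y
      in (P - {A, B} \<union> {A \<union> B}, (f(A := undefined, B := undefined))(A \<union> B := f A \<union> f B \<union> {{x, y}})))"

lemma remove_tree_edge_in_tree_partitions:
  assumes G: "graph V E" and Pf: "(P, f) \<in> tree_partitions k V E" and S: "S \<in> P" and xy: "{x, y} \<in> f S"
  shows "remove_tree_edge (P, f) x y \<in> tree_partitions (Suc k) V E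
    \<and> add_tree_edge (remove_tree_edge (P, f) x y) x y = (P, f)"
proof -
  have P: "connected_partition V E k P" and f: "f \<in> Pi\<^sub>E P (spanning_trees E)"
    using Pf unfolding tree_partitions_def by auto
  have SV: "S \<subseteq> V" using connected_partition_piece_subset[OF P S] .
  have T: "f S \<subseteq> E" "tree S (f S)" using f S spanning_trees_iff[OF G SV] by auto
  define F where "F = f S - {{x, y}}"
  define A where "A = reachable_within S F x"
  define B where "B = S - A"
  note cut = tree_Diff_edge[OF T(2) xy, folded F_def, folded A_def, folded B_def]
  have x: "x \<in> S" and AS: "A \<subseteq> S" using cut(1) unfolding A_def reachable_within_def by auto
  have FE: "induced_edges F A \<subseteq> E" "induced_edges F B \<subseteq> E"
    using T(1) unfolding F_def induced_edges_def by auto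
  have AB: "A \<noteq> B" "A \<notin> P" "B \<notin> P"
    using cut(1,2) connected_partition_disjoint[OF P S] x AS unfolding B_def by blast+
  define P' where "P' = P - {S} \<union> {A, B}"
  define f' where "f' = (f(S := undefined))(A := induced_edges F A, B := induced_edges F B)"
  have P': "connected_partition V E (Suc k) P'"
    unfolding P'_def B_def
    by (rule connected_partition_split[OF P S AS])
      (use cut FE tree_connected_induced_edges B_def in auto)
  have "induced_edges F A \<in> spanning_trees E A" "induced_edges F B \<in> spanning_trees E B"
  proof -
    have "A \<subseteq> V" "B \<subseteq> V" using SV AS unfolding B_def by auto
    then show "induced_edges F A \<in> spanning_trees E A" "induced_edges F B \<in> spanning_trees E B"
      using cut(3,4) FE spanning_trees_iff[OF G] unfolding B_def by auto
  qed
  then have "f' \<in> Pi\<^sub>E P' (spanning_trees E)"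
    using f AB unfolding P'_def f'_def PiE_iff extensional_def by auto
  then have "(P', f') \<in> tree_partitions (Suc k) V E"
    using P' unfolding tree_partitions_def by simp
  moreover have "remove_tree_edge (P, f) x y = (P', f')"
    using piece_of_eq[OF P S x] by (simp add: Let_def P'_def f'_def A_def B_def F_def)
  moreover have "add_tree_edge (P', f') x y = (P, f)"
  proof -
    have "piece_of P' x = A" "piece_of P' y = B"
      using piece_of_eq[OF P'] cut(1,2) unfolding P'_def B_def by auto
    moreover have "A \<union> B = S" using AS unfolding B_def by auto
    moreover have "P' - {A, B} \<union> {S} = P" using AB S unfolding P'_def by auto
    moreover have "f' A \<union> f' B \<union> {{x, y}} = f S"
      using AB cut(5) xy unfolding f'_def F_def B_def by auto
    moreover have "(f'(A := undefined, B := undefined))(S := f S) = f"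
      using AB f unfolding f'_def by (auto simp: fun_eq_iff PiE_iff extensional_def)
    ultimately show ?thesis by (simp add: Let_def)
  qed
  ultimately show ?thesis by simp
qed

lemma add_tree_edge_in_tree_partitions:
  assumes G: "graph V E" and Pf: "(P, f) \<in> tree_partitions (Suc k) V E"
    and A: "A \<in> P" and B: "B \<in> P" "A \<noteq> B" and xy: "x \<in> A" "y \<in> B" "{x, y} \<in> E"
  shows "add_tree_edge (P, f) x y \<in> tree_partitions k V E
    \<and> remove_tree_edge (add_tree_edge (P, f) x y) x y = (P, f)"
proof -
  have P: "connected_partition V E (Suc k) P" and f: "f \<in> Pi\<^sub>E P (spanning_trees E)"
    using Pf unfolding tree_partitions_def by auto
  have V: "A \<subseteq> V" "B \<subseteq> V" using connected_partition_piece_subset[OF P] A B by auto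
  have TA: "f A \<subseteq> E" "tree A (f A)" using f A spanning_trees_iff[OF G V(1)] by auto
  have TB: "f B \<subseteq> E" "tree B (f B)" using f B spanning_trees_iff[OF G V(2)] by auto
  have AB: "A \<inter> B = {}" using connected_partition_disjoint[OF P A B(1)] B(2) by blast
  define T where "T = f A \<union> f B \<union> {{x, y}}"
  have T: "T \<subseteq> E" "tree (A \<union> B) T"
    using TA TB xy tree_join[OF TA(2) TB(2) AB xy(1,2)] unfolding T_def by auto
  have ABP: "A \<union> B \<notin> P" using connected_partition_disjoint[OF P A] AB xy(1,2) by blast
  define P' where "P' = P - {A, B} \<union> {A \<union> B}"
  define f' where "f' = (f(A := undefined, B := undefined))(A \<union> B := T)"
  have P': "connected_partition V E k P'"
    unfolding P'_def using connected_partition_merge[OF P A B] tree_connected_induced_edges T by blast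
  have "T \<in> spanning_trees E (A \<union> B)" using T V spanning_trees_iff[OF G] by auto
  then have "f' \<in> Pi\<^sub>E P' (spanning_trees E)"
    using f ABP unfolding P'_def f'_def PiE_iff extensional_def by auto
  then have "(P', f') \<in> tree_partitions k V E"
    using P' unfolding tree_partitions_def by simp
  moreover have "add_tree_edge (P, f) x y = (P', f')"
    using piece_of_eq[OF P A xy(1)] piece_of_eq[OF P B(1) xy(2)]
    by (simp add: Let_def P'_def f'_def T_def)
  moreover have "remove_tree_edge (P', f') x y = (P, f)"
  proof -
    have "{x, y} \<notin> f A \<union> f B" using tree_edges_subset TA(2) TB(2) xy(1,2) AB by blast
    then have F: "f' (A \<union> B) - {{x, y}} = f A \<union> f B" unfolding f'_def T_def by auto
    have gA: "graph A (f A)" and gB: "graph B (f B)" using TA TB tree_graph by auto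
    have "piece_of P' x = A \<union> B" using piece_of_eq[OF P'] xy(1) unfolding P'_def by auto
    moreover have "reachable_within (A \<union> B) (f A \<union> f B) x = A"
      using reachable_within_Un_tree[OF TA(2) gB AB xy(1)] .
    moreover have "induced_edges (f A \<union> f B) A = f A" "induced_edges (f A \<union> f B) B = f B"
      using induced_edges_Un_disjoint gA gB AB by (metis Int_commute Un_commute)+
    moreover have "A \<union> B - A = B" using AB by auto
    moreover have "P' - {A \<union> B} \<union> {A, B} = P" using ABP A B unfolding P'_def by auto
    moreover have "(f'(A \<union> B := undefined))(A := f A, B := f B) = f"
      using ABP f unfolding f'_def by (auto simp: fun_eq_iff PiE_iff extensional_def)
    ultimately show ?thesis using F by (simp add: Let_def)
  qed
  ultimately show ?thesis by simp
qed

section \<open>Bounds on W\<close>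

lemma card_le_card_times_square:
  assumes "finite B" "finite V" "A \<subseteq> (\<lambda>(b, x, y). h b x y) ` (B \<times> V \<times> V)"
  shows "card A \<le> card B * card V ^ 2"
proof -
  have "card A \<le> card ((\<lambda>(b, x, y). h b x y) ` (B \<times> V \<times> V))"
    using assms by (intro card_mono) auto
  also have "\<dots> \<le> card (B \<times> V \<times> V)" by (rule card_image_le) (use assms in auto)
  finally show ?thesis by (simp add: card_cartesian_product power2_eq_square)
qed

lemma W_Suc_le:
  assumes G: "graph V E" and C: "connected_graph V E" and "1 \<le> k"
  shows "W (Suc k) V E \<le> W k V E * card V ^ 2"
proof -
  have "tree_partitions (Suc k) V E
      \<subseteq> (\<lambda>(q, x, y). remove_tree_edge q x y) ` (tree_partitions k V E \<times> V \<times> V)"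
  proof
    fix q assume q: "q \<in> tree_partitions (Suc k) V E"
    obtain P f where Pf: "q = (P, f)" by fastforce
    then have "connected_partition V E (Suc k) P" using q unfolding tree_partitions_def by auto
    moreover have "2 \<le> Suc k" using assms(3) by simp
    ultimately obtain A B x y where "A \<in> P" "B \<in> P" "A \<noteq> B" "x \<in> A" "y \<in> B" "{x, y} \<in> E"
      using connected_partition_crossing_edge[OF C] by blast
    then have "add_tree_edge q x y \<in> tree_partitions k V E" "remove_tree_edge (add_tree_edge q x y) x y = q"
      "x \<in> V" "y \<in> V"
      using add_tree_edge_in_tree_partitions[OF G q[unfolded Pf]] graph_doubleton_edge[OF G] Pf by blast+
    then show "q \<in> (\<lambda>(q, x, y). remove_tree_edge q x y) ` (tree_partitions k V E \<times> V \<times> V)"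
      by (intro image_eqI[of _ _ "(add_tree_edge q x y, x, y)"]) auto
  qed
  moreover have "finite V" using G unfolding graph_def by simp
  ultimately have "card (tree_partitions (Suc k) V E) \<le> card (tree_partitions k V E) * card V ^ 2"
    using card_le_card_times_square finite_tree_partitions[OF G] by blast
  then show ?thesis by (simp add: card_tree_partitions[OF G])
qed

lemma W_le_W_Suc:
  assumes G: "graph V E" and "k < card V"
  shows "W k V E \<le> W (Suc k) V E * card V ^ 2"
proof -
  have fin: "finite V" using G unfolding graph_def by simp
  have "tree_partitions k V E
      \<subseteq> (\<lambda>(q, x, y). add_tree_edge q x y) ` (tree_partitions (Suc k) V E \<times> V \<times> V)"
  proof
    fix q assume q: "q \<in> tree_partitions k V E"
    obtain P f where Pf: "q = (P, f)" by fastforce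
    then have P: "connected_partition V E k P" and f: "f \<in> Pi\<^sub>E P (spanning_trees E)"
      using q unfolding tree_partitions_def by auto
    obtain S where S: "S \<in> P" "2 \<le> card S" using connected_partition_large_piece[OF P fin assms(2)] by blast
    then have "tree S (f S)" "f S \<subseteq> E"
      using f spanning_trees_iff[OF G connected_partition_piece_subset[OF P S(1)]] by auto
    then have "f S \<noteq> {}" using S(2) unfolding tree_def by auto
    then obtain x y where "{x, y} \<in> f S" "x \<in> V" "y \<in> V"
      using graph_edgeE[OF G] \<open>f S \<subseteq> E\<close> by (metis all_not_in_conv subsetD)
    then have "remove_tree_edge q x y \<in> tree_partitions (Suc k) V E"
      "add_tree_edge (remove_tree_edge q x y) x y = q" "x \<in> V" "y \<in> V"
      using remove_tree_edge_in_tree_partitions[OF G q[unfolded Pf] S(1)] Pf by auto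
    then show "q \<in> (\<lambda>(q, x, y). add_tree_edge q x y) ` (tree_partitions (Suc k) V E \<times> V \<times> V)"
      by (intro image_eqI[of _ _ "(remove_tree_edge q x y, x, y)"]) auto
  qed
  then have "card (tree_partitions k V E) \<le> card (tree_partitions (Suc k) V E) * card V ^ 2"
    using card_le_card_times_square finite_tree_partitions[OF G] fin by blast
  then show ?thesis by (simp add: card_tree_partitions[OF G])
qed

lemma W_one:
  assumes G: "graph V E" and C: "connected_graph V E"
  shows "W 1 V E = \<tau> V E"
proof -
  have E: "induced_edges E V = E" using G unfolding graph_def induced_edges_def by auto
  have "connected_partition V E 1 P \<longleftrightarrow> P = {V}" for P
  proof
    assume P: "connected_partition V E 1 P"
    then obtain S where "P = {S}" unfolding connected_partition_def by (auto simp: card_1_singleton_iff)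
    then show "P = {V}" using P unfolding connected_partition_def by auto
  next
    assume "P = {V}"
    then show "connected_partition V E 1 P"
      using C E unfolding connected_partition_def connected_graph_def by auto
  qed
  then have "{P. connected_partition V E 1 P} = {{V}}" by blast
  then show ?thesis unfolding W_def spanning_tree_weight_def using E by simp
qed

lemma W_card_pos:
  assumes G: "graph V E"
  shows "0 < W (card V) V E"
proof -
  have fin: "finite V" using G unfolding graph_def by simp
  define P where "P = (\<lambda>v. {v}) ` V"
  have "\<not> e \<subseteq> {v}" if "e \<in> E" for e v
    using graph_edgeE[OF G that] by (metis insert_subset singletonD)
  then have "induced_edges E {v} = {}" for v unfolding induced_edges_def by blast
  then have "{T. spanning_tree {v} (induced_edges E {v}) T} = {{}}" for v
    unfolding spanning_tree_def connected_graph_def by auto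
  then have "spanning_tree_weight E P = 1"
    unfolding spanning_tree_weight_def num_spanning_trees_def P_def by (simp add: prod.reindex)
  moreover have "spanning_tree_weight E P \<le> W (card V) V E"
    unfolding W_def
  proof (rule member_le_sum)
    show "P \<in> {P. connected_partition V E (card V) P}"
      unfolding connected_partition_def connected_graph_def P_def using fin by (auto simp: card_image)
  qed (use finite_connected_partitions[OF fin] in auto)
  ultimately show ?thesis by simp
qed

lemma W_le_power_tau:
  assumes "graph V E" "connected_graph V E"
  shows "W (Suc m) V E \<le> (card V ^ 2) ^ m * \<tau> V E"
proof (induction m)
  case 0
  then show ?case using W_one[OF assms] by simp
next
  case (Suc m)
  have "W (Suc (Suc m)) V E \<le> W (Suc m) V E * card V ^ 2" using W_Suc_le[OF assms] by simp
  also have "\<dots> \<le> (card V ^ 2) ^ Suc m * \<tau> V E" using Suc.IH by (simp add: mult_ac)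
  finally show ?case .
qed

lemma tau_le_power_W:
  assumes "graph V E" "connected_graph V E" "Suc m \<le> card V"
  shows "\<tau> V E \<le> (card V ^ 2) ^ m * W (Suc m) V E"
  using assms(3)
proof (induction m)
  case 0
  then show ?case using W_one[OF assms(1,2)] by simp
next
  case (Suc m)
  have "\<tau> V E \<le> (card V ^ 2) ^ m * W (Suc m) V E" using Suc by simp
  also have "\<dots> \<le> (card V ^ 2) ^ m * (W (Suc (Suc m)) V E * card V ^ 2)"
    using W_le_W_Suc[OF assms(1)] Suc.prems by simp
  finally show ?case by (simp add: mult_ac)
qed

theorem mainTheorem8:
  fixes V :: "'a set" and E :: "'a set set" and n k :: nat
  assumes "graph V E" and "connected_graph V E" and "card V = n"
    and "1 \<le> k" and "k \<le> n"
  shows "inverse (real n ^ (2 * (k - 1))) \<le> real (W k V E) / real (\<tau> V E)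
       \<and> real (W k V E) / real (\<tau> V E) \<le> real n ^ (2 * (k - 1))"
proof -
  obtain m where k: "k = Suc m" using assms(4) by (cases k) auto
  define N where "N = (n ^ 2) ^ m"
  have "W k V E \<le> N * \<tau> V E"
    using W_le_power_tau[OF assms(1,2)] assms(3) k unfolding N_def by simp
  then have upper: "real (W k V E) \<le> real N * real (\<tau> V E)" by (metis of_nat_le_iff of_nat_mult)
  have "\<tau> V E \<le> N * W k V E"
    using tau_le_power_W[OF assms(1,2)] assms(3,5) k unfolding N_def by simp
  then have lower: "real (\<tau> V E) \<le> real N * real (W k V E)" by (metis of_nat_le_iff of_nat_mult)
  have "0 < W n V E" "W n V E \<le> (n ^ 2) ^ (n - 1) * \<tau> V E"
    using W_card_pos[OF assms(1)] W_le_power_tau[OF assms(1,2), of "n - 1"] assms(3-5) by auto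
  then have "0 < real (\<tau> V E)" by (metis gr0I mult_0_right not_le of_nat_0_less_iff)
  moreover have "0 < real N" using assms(4,5) unfolding N_def by simp
  moreover have N: "real n ^ (2 * (k - 1)) = real N" unfolding N_def k by (simp add: power_mult)
  ultimately show ?thesis
    unfolding N using upper lower by (simp add: inverse_eq_divide divide_le_eq le_divide_eq mult.commute)
qed

end
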